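(* Let $\mathcal{R}:L^2(\mathcal{X},\mathcal{V},\hat P)\to\mathbb{R}$ be $\lambda$-strongly convex and $\Lambda$-strongly smooth, let $\mathcal{H}\subset L^2(\mathcal{X},\mathcal{V},\hat P)$ be a restriction set with edge $\gamma$, and let $f^*=\operatorname{argmin}_{f}\mathcal{R}[f]$. Given a starting point $f_0$ and constant step size $\eta_t=\frac1\Lambda$, after $T$ iterations of the Naive Gradient Projection Algorithm the iterate $f_T$ satisfies $$\mathcal{R}[f_T]-\mathcal{R}[f^*]\le\left(1-\frac{\gamma^2\lambda}{\Lambda}\right)^T\left(\mathcal{R}[f_0]-\mathcal{R}[f^*]\right).$$
   Context: $L^2(\mathcal{X},\mathcal{V},\hat P)$: for training points $x_1,\dots,x_N\in\mathcal{X}$ and a real inner-product space $\mathcal{V}$, the Hilbert space of (equivalence classes of) functions $f:\mathcal{X}\to\mathcal{V}$ with inner product $\langle f,g\rangle=\frac1N\sum_{n=1}^N\langle f(x_n),g(x_n)\rangle_{\mathcal{V}}$ and norm $\|f\|=\sqrt{\langle f,f\rangle}$. A subgradient of $\mathcal{R}$ at $f$ is any $\nabla$ with $\mathcal{R}[g]\ge\mathcal{R}[f]+\langle g-f,\nabla\rangle$ for all $g$; $\nabla\mathcal{R}[f]$ denotes a (the set of) subgradient(s). $\mathcal{R}$ is $\lambda$-strongly convex if $\mathcal{R}[f']\ge\mathcal{R}[f]+\langle\nabla\mathcal{R}[f],f'-f\rangle+\frac\lambda2\|f'-f\|^2$ for all $f,f'$, and $\Lambda$-strongly smooth if $\mathcal{R}[f']\le\mathcal{R}[f]+\langle\nabla\mathcal{R}[f],f'-f\rangle+\frac\Lambda2\|f'-f\|^2$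 for all $f,f'$ ($\lambda,\Lambda>0$). Edge: a set $\mathcal{H}$ has edge $\gamma\in[0,1]$ if for every $g$ there exists $h\in\mathcal{H}$ such that either $\langle g,h\rangle\ge\gamma\|g\|\|h\|$ or $\|g-h\|^2\le(1-\gamma^2)\|g\|^2$. Projecting $g$ onto $\mathcal{H}$: choosing $h^*\in\mathcal{H}$ either as a maximizer of $\langle g,h\rangle/\|h\|$ over $h\in\mathcal{H}$, or, when $\mathcal{H}$ is closed under scalar multiplication, as a minimizer of $\|g-h\|^2$ over $h\in\mathcal{H}$ (minimizers/maximizers assumed to exist). Naive Gradient Projection Algorithm: given $f_0$ and step sizes $\eta_t$, for $t=1,\dots,T$: compute a subgradient $\nabla_t\in\nabla\mathcal{R}[f_{t-1}]$, project $\nabla_t$ onto $\mathcal{H}$ obtaining $h^*$, and set $f_t=f_{t-1}-\eta_t\frac{\langle h^*,\nabla_t\rangle}{\|h^*\|^2}h^*$. *)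

theory Defs
  imports "HOL-Analysis.Analysis"
begin

text \<open>Empirical L2 space over training points xs 0, ..., xs (N-1); elements are
  represented by functions 'x => 'v (equivalence = agreement on the points).\<close>

definition l2_inner :: "nat \<Rightarrow> (nat \<Rightarrow> 'x) \<Rightarrow> ('x \<Rightarrow> 'v::real_inner) \<Rightarrow> ('x \<Rightarrow> 'v) \<Rightarrow> real" where
  "l2_inner N xs f g = (1 / real N) * (\<Sum>n<N. inner (f (xs n)) (g (xs n)))"

definition l2_norm :: "nat \<Rightarrow> (nat \<Rightarrow> 'x) \<Rightarrow> ('x \<Rightarrow> 'v::real_inner) \<Rightarrow> real" where
  "l2_norm N xs f = sqrt (l2_inner N xs f f)"

definition subgradients ::
  "nat \<Rightarrow> (nat \<Rightarrow> 'x) \<Rightarrow> (('x \<Rightarrow> 'v::real_inner) \<Rightarrow> real) \<Rightarrow> ('x \<Rightarrow> 'v) \<Rightarrow> ('x \<Rightarrow> 'v) set" where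
  "subgradients N xs R f = {d. \<forall>g. R g \<ge> R f + l2_inner N xs (g - f) d}"

definition strongly_convex ::
  "nat \<Rightarrow> (nat \<Rightarrow> 'x) \<Rightarrow> real \<Rightarrow> (('x \<Rightarrow> 'v::real_inner) \<Rightarrow> real) \<Rightarrow> bool" where
  "strongly_convex N xs lam R \<longleftrightarrow>
     (\<forall>f f'. \<forall>d \<in> subgradients N xs R f.
        R f' \<ge> R f + l2_inner N xs d (f' - f) + lam / 2 * (l2_norm N xs (f' - f))\<^sup>2)"

definition strongly_smooth ::
  "nat \<Rightarrow> (nat \<Rightarrow> 'x) \<Rightarrow> real \<Rightarrow> (('x \<Rightarrow> 'v::real_inner) \<Rightarrow> real) \<Rightarrow> bool" where
  "strongly_smooth N xs Lam R \<longleftrightarrow>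
     (\<forall>f f'. \<forall>d \<in> subgradients N xs R f.
        R f' \<le> R f + l2_inner N xs d (f' - f) + Lam / 2 * (l2_norm N xs (f' - f))\<^sup>2)"

text \<open>Edge: the first alternative (cosine bound) is read with h nonzero.\<close>
definition has_edge ::
  "nat \<Rightarrow> (nat \<Rightarrow> 'x) \<Rightarrow> ('x \<Rightarrow> 'v::real_inner) set \<Rightarrow> real \<Rightarrow> bool" where
  "has_edge N xs H \<gamma> \<longleftrightarrow> 0 \<le> \<gamma> \<and> \<gamma> \<le> 1 \<and>
     (\<forall>g. \<exists>h \<in> H.
        (l2_norm N xs h \<noteq> 0 \<and> l2_inner N xs g h \<ge> \<gamma> * l2_norm N xs g * l2_norm N xs h)
      \<or> (l2_norm N xs (g - h))\<^sup>2 \<le> (1 - \<gamma>\<^sup>2) * (l2_norm N xs g)\<^sup>2)"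

definition is_projection ::
  "nat \<Rightarrow> (nat \<Rightarrow> 'x) \<Rightarrow> ('x \<Rightarrow> 'v::real_inner) set \<Rightarrow> ('x \<Rightarrow> 'v) \<Rightarrow> ('x \<Rightarrow> 'v) \<Rightarrow> bool" where
  "is_projection N xs H g h \<longleftrightarrow> h \<in> H \<and>
     ((l2_norm N xs h \<noteq> 0 \<and>
       (\<forall>h' \<in> H. l2_norm N xs h' \<noteq> 0 \<longrightarrow>
          l2_inner N xs g h' / l2_norm N xs h' \<le> l2_inner N xs g h / l2_norm N xs h))
    \<or> ((\<forall>c::real. \<forall>h' \<in> H. (\<lambda>x. c *\<^sub>R h' x) \<in> H) \<and>
       (\<forall>h' \<in> H. (l2_norm N xs (g - h))\<^sup>2 \<le> (l2_norm N xs (g - h'))\<^sup>2)))"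

end

theory Submission
  imports Defs
begin

(* Write <_,_> and ||_|| for the empirical L2 inner product and norm, and call
   captured g h = <g,h>^2 / <h,h> the part of ||g||^2 that the direction h explains.
   The proof has three ingredients, developed in this order:
   (1) Projection: if H has edge gamma, any projection h of g onto H (by either of
       the two admissible rules) satisfies gamma^2 ||g||^2 <= captured g h.  The edge
       alternatives both yield a direction with cosine at least gamma; the
       maximising rule dominates that cosine directly, the minimising rule
       dominates the optimal rescaling of that direction.
   (2) Descent: by strong smoothness, the step along h with step size 1/Lam
       decreases R by at least captured g h / (2 Lam).
   (3) Polyak-Lojasiewicz: by strong convexity, R f - R fstar <= ||g||^2 / (2 lam)
       for every subgradient g at f.
   Together they give the one-step contraction
   R f_t - R fstar <= (1 - gamma^2 lam / Lam) (R f_(t-1) - R fstar), and a geometric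
   decay lemma for nonnegative sequences turns this into the theorem. *)

lemma l2_inner_sym: "l2_inner N xs f g = l2_inner N xs g f"
  unfolding l2_inner_def by (simp add: inner_commute)

lemma l2_inner_self_nonneg: "0 \<le> l2_inner N xs f f"
  unfolding l2_inner_def by (auto intro!: sum_nonneg divide_nonneg_nonneg)

lemma l2_norm_sq: "(l2_norm N xs f)\<^sup>2 = l2_inner N xs f f"
  unfolding l2_norm_def using l2_inner_self_nonneg by simp

lemma l2_norm_nonneg: "0 \<le> l2_norm N xs f"
  unfolding l2_norm_def using l2_inner_self_nonneg[of N xs f] by simp

lemma l2_inner_diff_left: "l2_inner N xs (f - g) k = l2_inner N xs f k - l2_inner N xs g k"
  unfolding l2_inner_def by (simp add: inner_diff_left sum_subtractf algebra_simps)

lemma l2_inner_diff_right: "l2_inner N xs k (f - g) = l2_inner N xs k f - l2_inner N xs k g"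
  unfolding l2_inner_def by (simp add: inner_diff_right sum_subtractf algebra_simps)

lemma l2_inner_scale_left: "l2_inner N xs (\<lambda>x. c *\<^sub>R f x) k = c * l2_inner N xs f k"
  unfolding l2_inner_def by (simp add: sum_distrib_left algebra_simps)

lemma l2_inner_scale_right: "l2_inner N xs k (\<lambda>x. c *\<^sub>R f x) = c * l2_inner N xs k f"
  unfolding l2_inner_def by (simp add: sum_distrib_left algebra_simps)

text \<open>A function of norm zero vanishes on the sample, hence is orthogonal to everything.\<close>
lemma l2_inner_null_right:
  assumes "l2_inner N xs h h = 0" shows "l2_inner N xs g h = 0"
proof (cases "N = 0")
  case True then show ?thesis unfolding l2_inner_def by simp
next
  case False
  then have "(\<Sum>n<N. inner (h (xs n)) (h (xs n))) = 0"
    using assms unfolding l2_inner_def by simp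
  then have "\<forall>n\<in>{..<N}. h (xs n) = 0"
    by (subst (asm) sum_nonneg_eq_0_iff) auto
  then show ?thesis unfolding l2_inner_def by simp
qed

lemma l2_residual_expand:
  "l2_inner N xs (g - (\<lambda>x. c *\<^sub>R k x)) (g - (\<lambda>x. c *\<^sub>R k x))
   = l2_inner N xs g g - 2 * c * l2_inner N xs g k + c\<^sup>2 * l2_inner N xs k k"
  by (simp add: l2_inner_diff_left l2_inner_diff_right l2_inner_scale_left
      l2_inner_scale_right l2_inner_sym[of N xs k g] power2_eq_square algebra_simps)

section \<open>Captured energy of a direction\<close>

text \<open>The squared length of the orthogonal projection of g onto the line through h
  (zero for a null h).\<close>
definition captured :: "nat \<Rightarrow> (nat \<Rightarrow> 'x) \<Rightarrow> ('x \<Rightarrow> 'v::real_inner) \<Rightarrow> ('x \<Rightarrow> 'v) \<Rightarrow> real" where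
  "captured N xs g h = (l2_inner N xs g h)\<^sup>2 / l2_inner N xs h h"

lemma captured_nonneg: "0 \<le> captured N xs g h"
  unfolding captured_def using l2_inner_self_nonneg[of N xs h] by simp

lemma residual_reduction_le_captured:
  "l2_inner N xs g g - l2_inner N xs (g - (\<lambda>x. c *\<^sub>R k x)) (g - (\<lambda>x. c *\<^sub>R k x))
   \<le> captured N xs g k"
proof (cases "l2_inner N xs k k = 0")
  case True
  then show ?thesis
    using l2_inner_null_right[OF True, of g] by (simp add: l2_residual_expand captured_def)
next
  case False
  then have pos: "l2_inner N xs k k > 0" using l2_inner_self_nonneg[of N xs k] by linarith
  have "0 \<le> (c * l2_inner N xs k k - l2_inner N xs g k)\<^sup>2" by simp
  then show ?thesis
    using pos by (simp add: l2_residual_expand captured_def field_simps power2_eq_square)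
qed

lemma residual_optimal_scaling:
  assumes "l2_inner N xs k k \<noteq> 0" and "c = l2_inner N xs g k / l2_inner N xs k k"
  shows "l2_inner N xs (g - (\<lambda>x. c *\<^sub>R k x)) (g - (\<lambda>x. c *\<^sub>R k x))
         = l2_inner N xs g g - captured N xs g k"
  using assms by (simp add: l2_residual_expand captured_def field_simps power2_eq_square)

lemma cosine_bound_captured:
  assumes "0 \<le> \<gamma>" and "l2_norm N xs h \<noteq> 0"
    and "\<gamma> * l2_norm N xs g * l2_norm N xs h \<le> l2_inner N xs g h"
  shows "\<gamma>\<^sup>2 * l2_inner N xs g g \<le> captured N xs g h"
proof -
  have hh: "l2_inner N xs h h > 0"
    using assms(2) l2_norm_sq[of N xs h] by (metis zero_less_power2)
  have "0 \<le> \<gamma> * l2_norm N xs g * l2_norm N xs h"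
    using assms(1) l2_norm_nonneg[of N xs g] l2_norm_nonneg[of N xs h] by simp
  then have "(\<gamma> * l2_norm N xs g * l2_norm N xs h)\<^sup>2 \<le> (l2_inner N xs g h)\<^sup>2"
    by (rule power_mono[OF assms(3)])
  then have "\<gamma>\<^sup>2 * l2_inner N xs g g * l2_inner N xs h h \<le> (l2_inner N xs g h)\<^sup>2"
    by (simp add: power_mult_distrib l2_norm_sq)
  then show ?thesis using hh by (simp add: captured_def field_simps)
qed

section \<open>Projections onto a set with edge gamma\<close>

text \<open>Both alternatives in the definition of edge provide a direction of cosine at
  least gamma, unless gamma^2 ||g||^2 vanishes: a residual bound
  ||g - h||^2 <= (1 - gamma^2) ||g||^2 means gamma^2 ||g||^2 + ||h||^2 <= 2 <g,h>, and
  AM-GM gives 2 gamma ||g|| ||h|| <= gamma^2 ||g||^2 + ||h||^2.\<close>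
lemma edge_cosine_direction:
  assumes edge: "has_edge N xs H \<gamma>" and nontriv: "0 < \<gamma>\<^sup>2 * l2_inner N xs g g"
  obtains h where "h \<in> H" "l2_norm N xs h \<noteq> 0"
    "\<gamma> * l2_norm N xs g * l2_norm N xs h \<le> l2_inner N xs g h"
proof -
  let ?I = "l2_inner N xs" and ?n = "l2_norm N xs"
  obtain h where hH: "h \<in> H" and alt:
    "(?n h \<noteq> 0 \<and> ?I g h \<ge> \<gamma> * ?n g * ?n h) \<or> (?n (g - h))\<^sup>2 \<le> (1 - \<gamma>\<^sup>2) * (?n g)\<^sup>2"
    using edge unfolding has_edge_def by blast
  have "?n h \<noteq> 0 \<and> \<gamma> * ?n g * ?n h \<le> ?I g h"
  proof (cases "(?n (g - h))\<^sup>2 \<le> (1 - \<gamma>\<^sup>2) * (?n g)\<^sup>2")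
    case False then show ?thesis using alt by blast
  next
    case True
    then have close: "\<gamma>\<^sup>2 * ?I g g + ?I h h \<le> 2 * ?I g h"
      by (simp add: l2_norm_sq l2_inner_diff_left l2_inner_diff_right
          l2_inner_sym[of N xs h g] algebra_simps)
    have "?I h h \<noteq> 0"
      using close nontriv l2_inner_null_right[of N xs h g] by auto
    then have "?n h \<noteq> 0" using l2_norm_sq[of N xs h] by auto
    moreover have "2 * (\<gamma> * ?n g * ?n h) \<le> \<gamma>\<^sup>2 * ?I g g + ?I h h"
    proof -
      have "0 \<le> (\<gamma> * ?n g - ?n h)\<^sup>2" by simp
      then show ?thesis by (simp add: power2_eq_square l2_norm_sq[symmetric] algebra_simps)
    qed
    ultimately show ?thesis using close by simp
  qed
  then show ?thesis using hH that by blast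
qed

lemma projection_captures_edge:
  assumes edge: "has_edge N xs H \<gamma>" and proj: "is_projection N xs H g h"
  shows "\<gamma>\<^sup>2 * l2_inner N xs g g \<le> captured N xs g h"
proof (cases "\<gamma>\<^sup>2 * l2_inner N xs g g \<le> 0")
  case True then show ?thesis using captured_nonneg[of N xs g h] by linarith
next
  case False
  let ?I = "l2_inner N xs" and ?n = "l2_norm N xs"
  have \<gamma>0: "0 \<le> \<gamma>" using edge unfolding has_edge_def by simp
  obtain k where kH: "k \<in> H" and k0: "?n k \<noteq> 0" and cos: "\<gamma> * ?n g * ?n k \<le> ?I g k"
    using edge_cosine_direction[OF edge] False by (metis not_le)
  from proj consider
    (max) "?n h \<noteq> 0" "\<forall>h' \<in> H. ?n h' \<noteq> 0 \<longrightarrow> ?I g h' / ?n h' \<le> ?I g h / ?n h"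
  | (min) "\<forall>c::real. \<forall>h' \<in> H. (\<lambda>x. c *\<^sub>R h' x) \<in> H"
          "\<forall>h' \<in> H. (?n (g - h))\<^sup>2 \<le> (?n (g - h'))\<^sup>2"
    unfolding is_projection_def by blast
  then show ?thesis
  proof cases
    case max
    text \<open>h has the largest cosine with g in H, in particular at least that of k.\<close>
    have nk: "?n k > 0" using k0 l2_norm_nonneg[of N xs k] by linarith
    have nh: "?n h > 0" using max(1) l2_norm_nonneg[of N xs h] by linarith
    have "\<gamma> * ?n g \<le> ?I g k / ?n k" using cos nk by (simp add: field_simps)
    also have "\<dots> \<le> ?I g h / ?n h" using max(2) kH k0 by blast
    finally have "\<gamma> * ?n g * ?n h \<le> ?I g h" using nh by (simp add: field_simps)
    then show ?thesis by (rule cosine_bound_captured[OF \<gamma>0 max(1)])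
  next
    case min
    text \<open>h leaves a residual no larger than the optimally rescaled k, which lies in H.\<close>
    define c where "c = ?I g k / ?I k k"
    have kk: "?I k k \<noteq> 0" using k0 l2_norm_sq[of N xs k] by auto
    have "(?n (g - h))\<^sup>2 \<le> (?n (g - (\<lambda>x. c *\<^sub>R k x)))\<^sup>2"
      using min kH by blast
    then have "?I (g - h) (g - h) \<le> ?I g g - captured N xs g k"
      by (simp add: l2_norm_sq residual_optimal_scaling[OF kk c_def])
    moreover have "?I g g - ?I (g - h) (g - h) \<le> captured N xs g h"
      using residual_reduction_le_captured[of N xs g 1 h] by simp
    moreover have "\<gamma>\<^sup>2 * ?I g g \<le> captured N xs g k"
      by (rule cosine_bound_captured[OF \<gamma>0 k0 cos])
    ultimately show ?thesis by linarith
  qed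
qed

section \<open>Descent and Polyak-Lojasiewicz inequalities\<close>

lemma smooth_descent:
  assumes sm: "strongly_smooth N xs Lam R" and Lam: "Lam > 0"
    and g: "g \<in> subgradients N xs R f"
    and step: "f' = (\<lambda>x. f x - ((1 / Lam) * (l2_inner N xs h g / (l2_norm N xs h)\<^sup>2)) *\<^sub>R h x)"
  shows "R f' \<le> R f - captured N xs g h / (2 * Lam)"
proof -
  let ?I = "l2_inner N xs"
  define a where "a = (1 / Lam) * (?I h g / ?I h h)"
  have diff: "f' - f = (\<lambda>x. (- a) *\<^sub>R h x)"
    unfolding step a_def l2_norm_sq by (rule ext) simp
  have "R f' \<le> R f + ?I g (f' - f) + Lam / 2 * (l2_norm N xs (f' - f))\<^sup>2"
    using sm g unfolding strongly_smooth_def by blast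
  also have "\<dots> = R f - a * ?I g h + Lam / 2 * a\<^sup>2 * ?I h h"
    unfolding diff l2_norm_sq l2_inner_scale_left l2_inner_scale_right
    by (simp add: power2_eq_square)
  also have "\<dots> = R f - captured N xs g h / (2 * Lam)"
    using Lam unfolding a_def captured_def
    by (cases "?I h h = 0") (simp_all add: l2_inner_sym[of N xs h g] field_simps power2_eq_square)
  finally show ?thesis .
qed

text \<open>Strong convexity bounds the suboptimality by the squared subgradient norm:
  minimise the quadratic lower bound R f + <g,d> + lam/2 ||d||^2 over d.\<close>
lemma polyak_lojasiewicz:
  assumes sc: "strongly_convex N xs lam R" and lam: "lam > 0"
    and g: "g \<in> subgradients N xs R f"
  shows "R f - R fs \<le> l2_inner N xs g g / (2 * lam)"
proof -
  let ?I = "l2_inner N xs"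
  define d where "d = fs - f"
  have lower: "R f + ?I g d + lam / 2 * ?I d d \<le> R fs"
    using sc g unfolding strongly_convex_def d_def l2_norm_sq by blast
  have "0 \<le> ?I (g - (\<lambda>x. (- lam) *\<^sub>R d x)) (g - (\<lambda>x. (- lam) *\<^sub>R d x))"
    by (rule l2_inner_self_nonneg)
  then have "0 \<le> ?I g g + 2 * lam * ?I g d + lam\<^sup>2 * ?I d d"
    unfolding l2_residual_expand by simp
  then have "- ?I g g / (2 * lam) \<le> ?I g d + lam / 2 * ?I d d"
    using lam by (simp add: field_simps power2_eq_square)
  then show ?thesis using lower by linarith
qed

lemma gradient_projection_contraction:
  assumes "lam > 0" and "Lam > 0"
    and "strongly_convex N xs lam R" and "strongly_smooth N xs Lam R"
    and "has_edge N xs H \<gamma>"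
    and g: "g \<in> subgradients N xs R f"
    and "is_projection N xs H g h"
    and "f' = (\<lambda>x. f x - ((1 / Lam) * (l2_inner N xs h g / (l2_norm N xs h)\<^sup>2)) *\<^sub>R h x)"
  shows "R f' - R fs \<le> (1 - \<gamma>\<^sup>2 * lam / Lam) * (R f - R fs)"
proof -
  let ?G = "l2_inner N xs g g"
  have descent: "R f' \<le> R f - captured N xs g h / (2 * Lam)"
    using smooth_descent[OF assms(4,2) g assms(8)] .
  have "\<gamma>\<^sup>2 * ?G / (2 * Lam) \<le> captured N xs g h / (2 * Lam)"
    using projection_captures_edge[OF assms(5,7)] assms(2) by (simp add: divide_right_mono)
  moreover have "\<gamma>\<^sup>2 * (2 * lam * (R f - R fs)) \<le> \<gamma>\<^sup>2 * ?G"
    using polyak_lojasiewicz[OF assms(3,1) g, of fs] assms(1)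
    by (intro mult_left_mono) (simp_all add: field_simps)
  ultimately show ?thesis
    using descent assms(2) by (simp add: field_simps)
qed

text \<open>Geometric decay of a nonnegative sequence satisfying e t <= c e (t-1).  The
  factor c may be negative; then the recursion forces e 1 = e 0 = 0.\<close>
lemma geometric_decay:
  fixes e :: "nat \<Rightarrow> real"
  assumes nonneg: "\<And>t. 0 \<le> e t" and rec: "\<And>t. t \<in> {1..T} \<Longrightarrow> e t \<le> c * e (t - 1)"
  shows "e T \<le> c ^ T * e 0"
proof -
  have "t \<le> T \<Longrightarrow> e t \<le> c ^ t * e 0" for t
  proof (induction t)
    case 0 then show ?case by simp
  next
    case (Suc t)
    have st: "e (Suc t) \<le> c * e t" using rec[of "Suc t"] Suc.prems by simp
    show ?case
    proof (cases "0 \<le> c")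
      case True
      then have "c * e t \<le> c * (c ^ t * e 0)" using Suc by (simp add: mult_left_mono)
      then show ?thesis using st by simp
    next
      case False
      have "e 1 \<le> c * e 0" using rec[of 1] Suc.prems by simp
      moreover have "c * e 0 \<le> 0" using False nonneg[of 0] by (simp add: mult_nonpos_nonneg)
      ultimately have "c * e 0 = 0" using nonneg[of 1] by linarith
      then have "e 0 = 0" using False by simp
      moreover have "c * e t \<le> 0" using False nonneg[of t] by (simp add: mult_nonpos_nonneg)
      ultimately show ?thesis using st by simp
    qed
  qed
  then show ?thesis by simp
qed

theorem theorem3:
  fixes N :: nat and xs :: "nat \<Rightarrow> 'x"
    and R :: "('x \<Rightarrow> 'v::real_inner) \<Rightarrow> real"
    and H :: "('x \<Rightarrow> 'v) set"
    and lam Lam \<gamma> :: real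
    and fstar :: "'x \<Rightarrow> 'v"
    and f grad h :: "nat \<Rightarrow> ('x \<Rightarrow> 'v)"
    and T :: nat
  assumes "N > 0"
    and "lam > 0" and "Lam > 0"
    and "strongly_convex N xs lam R"
    and "strongly_smooth N xs Lam R"
    and "has_edge N xs H \<gamma>"
    and "\<forall>g. R fstar \<le> R g"
    and "\<forall>t \<in> {1..T}. grad t \<in> subgradients N xs R (f (t - 1))"
    and "\<forall>t \<in> {1..T}. is_projection N xs H (grad t) (h t)"
    and "\<forall>t \<in> {1..T}. f t = (\<lambda>x. f (t - 1) x -
           ((1 / Lam) * (l2_inner N xs (h t) (grad t) / (l2_norm N xs (h t))\<^sup>2)) *\<^sub>R h t x)"
  shows "R (f T) - R fstar \<le> (1 - \<gamma>\<^sup>2 * lam / Lam) ^ T * (R (f 0) - R fstar)"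
proof (rule geometric_decay)
  show "0 \<le> R (f t) - R fstar" for t using assms(7) by simp
  show "R (f t) - R fstar \<le> (1 - \<gamma>\<^sup>2 * lam / Lam) * (R (f (t - 1)) - R fstar)"
    if "t \<in> {1..T}" for t
    using gradient_projection_contraction[OF assms(2-6)] assms(8-10) that by blast
qed

end
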